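(* In the standing setting, let $k_1,k_2>0$, let $\beta_{\min}\in(\beta_{\mathrm{crit}},1]$ be a constant, and let $\beta:[0,\infty)\to[\beta_{\min},1]$ be continuous. Apply the relieved control law. Then the origin of the closed-loop error dynamics is almost globally uniformly exponentially stable, in the following sense: (i) for every $\mathbf z_0\in\mathbb R^6$ and every $T\ge0$ such that the closed-loop solution satisfies $\mathbf z(s)\in\mathcal D(s)$ for all $s\in[0,T]$, one has $\|\mathbf z(t)\|\le\rho\|\mathbf z_0\|e^{-\theta t}$ for all $t\in[0,T]$, where $\rho>0$ and $\theta>0$ are the constants defined in the context; (ii) the set of initial conditions $\mathbf z_0\in\mathbb R^6$ whose closed-loop solution (of the linear time-varying system $\dot{\mathbf z}_1=\mathbf z_2$, $\dot{\mathbf z}_2=-\beta(t)[(1+k_1k_2)\mathbf z_1+(k_1+k_2)\mathbf z_2]$) satisfies $\mathbf z_1(t)=\mathbf w_j(t)$ for some $t\ge0$ and some $j$ has Lebesgue measure zero in $\mathbb R^6$.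
   Context: Standing setting: Let $P\ge1$. For $j=1,\dots,P$ let $\mu_j>0$ and let $\mathbf r_j:[0,\infty)\to\mathbb R^3$ be continuously differentiable, with $\mathbf r_1\equiv\mathbf 0$. Let $\mathbf r^*:[0,\infty)\to\mathbb R^3$ be continuously differentiable (the target trajectory) with $\mathbf r^*(t)\neq\mathbf r_j(t)$ for all $t\ge0$ and all $j$, and set $\mathbf w_j(t):=\mathbf r_j(t)-\mathbf r^*(t)$. For $t\ge0$ and $\mathbf z_1\in\mathbb R^3$ with $\mathbf z_1\ne\mathbf w_j(t)$ for all $j$, define $$\mathbf f_a(t,\mathbf z_1)=\sum_{j=1}^P\mu_j\left(\frac{\mathbf w_j(t)-\mathbf z_1}{\|\mathbf w_j(t)-\mathbf z_1\|^3}-\frac{\mathbf w_j(t)}{\|\mathbf w_j(t)\|^3}\right).$$ The controlled error dynamics are $\dot{\mathbf z}_1(t)=\mathbf z_2(t)$, $\dot{\mathbf z}_2(t)=\mathbf f_a(t,\mathbf z_1(t))+\mathbf u(t)$, with state $\mathbf z=(\mathbf z_1,\mathbf z_2)\in\mathbb R^6$, control $\mathbf u(t)\in\mathbb R^3$, initial time $0$ and $\mathbf z_0:=\mathbf z(0)$, defined on $\mathcal D(t)=\{(\mathbf x,\mathbf y)\in\mathbb R^6:\mathbf x\neq\mathbf w_j(t),\ j=1,\dots,P\}$. $\|\cdot\|$ is the Euclidean norm; $\lambda_{\min},\lambda_{\max}$ denote smallest/largest eigenvalues. Relieved control law: $\mathbf u(t)=-\beta(t)\big[(1+k_1k_2)\mathbf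 z_1(t)+(k_1+k_2)\mathbf z_2(t)\big]-\mathbf f_a(t,\mathbf z_1(t))$. Critical relief: $\beta_{\mathrm{crit}}=\dfrac{k_1^4+2k_1k_2+1-2\sqrt{(k_1k_2+1)(k_1k_2+k_1^4)}}{(k_1^2-1)^2}$ if $k_1\ne1$, and $\beta_{\mathrm{crit}}=\dfrac{1}{1+k_2}$ if $k_1=1$. Matrices and constants: $\mathbf X=\begin{bmatrix}(1+k_1^2)\mathbf I_3&k_1\mathbf I_3\\k_1\mathbf I_3&\mathbf I_3\end{bmatrix}$, $\rho=\sqrt{\lambda_{\max}(\mathbf X)/\lambda_{\min}(\mathbf X)}$; $\mathbf U(\beta)=\begin{bmatrix}2(k_1+k_1^2k_2)\beta\,\mathbf I_3 & ((k_1^2+2k_1k_2+1)\beta-k_1^2-1)\mathbf I_3\\ ((k_1^2+2k_1k_2+1)\beta-k_1^2-1)\mathbf I_3 & 2((k_1+k_2)\beta-k_1)\mathbf I_3\end{bmatrix}$; $\theta=\dfrac{\lambda_{\min}(\mathbf U(\beta_{\min}))}{2\lambda_{\max}(\mathbf X)}$. *)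

theory Defs
  imports "HOL-Analysis.Analysis"
begin

text \<open>State space R^6 is rendered as (real^3) x (real^3), a state being (z1, z2).
  Its norm is the Euclidean norm of R^6 and lebesgue is Lebesgue measure on R^6.\<close>

type_synonym vec3 = "real^3"
type_synonym state = "vec3 \<times> vec3"

definition C1_nonneg :: "(real \<Rightarrow> vec3) \<Rightarrow> bool" where
  "C1_nonneg f \<longleftrightarrow> (\<exists>f'. (\<forall>t\<ge>0. (f has_vector_derivative f' t) (at t within {0..}))
                         \<and> continuous_on {0..} f')"

definition wj :: "(nat \<Rightarrow> real \<Rightarrow> vec3) \<Rightarrow> (real \<Rightarrow> vec3) \<Rightarrow> nat \<Rightarrow> real \<Rightarrow> vec3" where
  "wj r rs j t = r j t - rs t"

definition f_a :: "nat \<Rightarrow> (nat \<Rightarrow> real) \<Rightarrow> (nat \<Rightarrow> real \<Rightarrow> vec3) \<Rightarrow> (real \<Rightarrow> vec3)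
                   \<Rightarrow> real \<Rightarrow> vec3 \<Rightarrow> vec3" where
  "f_a P \<mu> r rs t z1 = (\<Sum>j\<in>{1..P}. \<mu> j *\<^sub>R
      ((1 / norm (wj r rs j t - z1) ^ 3) *\<^sub>R (wj r rs j t - z1)
       - (1 / norm (wj r rs j t) ^ 3) *\<^sub>R wj r rs j t))"

definition dom_D :: "nat \<Rightarrow> (nat \<Rightarrow> real \<Rightarrow> vec3) \<Rightarrow> (real \<Rightarrow> vec3) \<Rightarrow> real \<Rightarrow> state set" where
  "dom_D P r rs t = {(x, y). \<forall>j\<in>{1..P}. x \<noteq> wj r rs j t}"

definition u_relieved :: "nat \<Rightarrow> (nat \<Rightarrow> real) \<Rightarrow> (nat \<Rightarrow> real \<Rightarrow> vec3) \<Rightarrow> (real \<Rightarrow> vec3)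
                          \<Rightarrow> (real \<Rightarrow> real) \<Rightarrow> real \<Rightarrow> real \<Rightarrow> real \<Rightarrow> state \<Rightarrow> vec3" where
  "u_relieved P \<mu> r rs \<beta> k1 k2 t z =
     - (\<beta> t *\<^sub>R ((1 + k1 * k2) *\<^sub>R fst z + (k1 + k2) *\<^sub>R snd z)) - f_a P \<mu> r rs t (fst z)"

definition closed_loop :: "nat \<Rightarrow> (nat \<Rightarrow> real) \<Rightarrow> (nat \<Rightarrow> real \<Rightarrow> vec3) \<Rightarrow> (real \<Rightarrow> vec3)
                          \<Rightarrow> (real \<Rightarrow> real) \<Rightarrow> real \<Rightarrow> real \<Rightarrow> real \<Rightarrow> state \<Rightarrow> state" where
  "closed_loop P \<mu> r rs \<beta> k1 k2 t z =
     (snd z, f_a P \<mu> r rs t (fst z) + u_relieved P \<mu> r rs \<beta> k1 k2 t z)"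

definition ltv_field :: "(real \<Rightarrow> real) \<Rightarrow> real \<Rightarrow> real \<Rightarrow> real \<Rightarrow> state \<Rightarrow> state" where
  "ltv_field \<beta> k1 k2 t z =
     (snd z, - (\<beta> t *\<^sub>R ((1 + k1 * k2) *\<^sub>R fst z + (k1 + k2) *\<^sub>R snd z)))"

definition beta_crit :: "real \<Rightarrow> real \<Rightarrow> real" where
  "beta_crit k1 k2 = (if k1 \<noteq> 1 then
      (k1 ^ 4 + 2 * k1 * k2 + 1 - 2 * sqrt ((k1 * k2 + 1) * (k1 * k2 + k1 ^ 4))) / (k1\<^sup>2 - 1)\<^sup>2
    else 1 / (1 + k2))"

text \<open>The 6x6 block matrix [[a I3, b I3],[c I3, d I3]] as the linear map it induces on R^6.\<close>
definition block_op :: "real \<Rightarrow> real \<Rightarrow> real \<Rightarrow> real \<Rightarrow> state \<Rightarrow> state" where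
  "block_op a b c d z = (a *\<^sub>R fst z + b *\<^sub>R snd z, c *\<^sub>R fst z + d *\<^sub>R snd z)"

definition eigenvalues_op :: "(state \<Rightarrow> state) \<Rightarrow> real set" where
  "eigenvalues_op A = {c. \<exists>v. v \<noteq> 0 \<and> A v = c *\<^sub>R v}"

definition lambda_min :: "(state \<Rightarrow> state) \<Rightarrow> real" where
  "lambda_min A = Min (eigenvalues_op A)"

definition lambda_max :: "(state \<Rightarrow> state) \<Rightarrow> real" where
  "lambda_max A = Max (eigenvalues_op A)"

definition Xmat :: "real \<Rightarrow> state \<Rightarrow> state" where
  "Xmat k1 = block_op (1 + k1\<^sup>2) k1 k1 1"

definition Umat :: "real \<Rightarrow> real \<Rightarrow> real \<Rightarrow> state \<Rightarrow> state" where
  "Umat k1 k2 \<beta> = block_op (2 * (k1 + k1\<^sup>2 * k2) * \<beta>)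
      ((k1\<^sup>2 + 2 * k1 * k2 + 1) * \<beta> - k1\<^sup>2 - 1)
      ((k1\<^sup>2 + 2 * k1 * k2 + 1) * \<beta> - k1\<^sup>2 - 1)
      (2 * ((k1 + k2) * \<beta> - k1))"

definition rho_const :: "real \<Rightarrow> real" where
  "rho_const k1 = sqrt (lambda_max (Xmat k1) / lambda_min (Xmat k1))"

definition theta_const :: "real \<Rightarrow> real \<Rightarrow> real \<Rightarrow> real" where
  "theta_const k1 k2 \<beta>min = lambda_min (Umat k1 k2 \<beta>min) / (2 * lambda_max (Xmat k1))"

end

theory Submission
  imports Defs
begin

(* The feedback cancels the gravitational term and leaves the linear system ltv_field. With
   E z = (z1, k1 z1 + z2) one has |E z|^2 = z . X z and d/dt |E z|^2 = - z . U(beta t) z. This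
   quadratic form is affine in beta, so on [beta_min, 1] it is bounded below by its values at
   beta_min, where U is positive definite (its determinant is a concave quadratic in beta that
   vanishes at beta_crit and is positive at 1), and at 1, where it equals
   2 k1 |z1|^2 + 2 k2 |k1 z1 + z2|^2. Hence |E z|^2 decays like exp (-2 theta t), and comparing
   |E z|^2 with |z|^2 through the extreme eigenvalues of X gives (i).

   For (ii): a solution of a linear system with bounded coefficients is determined by its value at
   any time t >= 0, and its initial value depends Lipschitz-continuously on (t, z(t)). The initial
   states whose solution meets z1 = w_j(t) are therefore a locally Lipschitz image of the
   4-dimensional set of pairs (t, z2(t)), which is a null set in R^6. *)

section \<open>Spectrum of symmetric block operators\<close>

lemma inner_form_nonneg:
  fixes x y :: "'a::real_inner"
  assumes "0 \<le> \<alpha>" "0 \<le> \<delta>" "\<alpha> * \<delta> = b\<^sup>2"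
  shows "0 \<le> \<alpha> * (x \<bullet> x) + 2 * b * (x \<bullet> y) + \<delta> * (y \<bullet> y)"
proof (cases "\<alpha> = 0")
  case True
  then show ?thesis using assms by simp
next
  case False
  have "\<alpha> * (\<alpha> * (x \<bullet> x) + 2 * b * (x \<bullet> y) + \<delta> * (y \<bullet> y))
      = (\<alpha> *\<^sub>R x + b *\<^sub>R y) \<bullet> (\<alpha> *\<^sub>R x + b *\<^sub>R y)"
    using assms(3) by (simp add: inner_add_left inner_add_right inner_commute power2_eq_square algebra_simps)
  also have "\<dots> \<ge> 0" by simp
  finally show ?thesis using False assms(1) by (simp add: zero_le_mult_iff)
qed

lemma inner_block_op:
  "z \<bullet> block_op a b b d z = a * (fst z \<bullet> fst z) + 2 * b * (fst z \<bullet> snd z) + d * (snd z \<bullet> snd z)"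
  by (simp add: block_op_def inner_prod_def inner_add_right inner_commute algebra_simps)

lemma norm_state_squared: "(norm z)\<^sup>2 = fst z \<bullet> fst z + snd z \<bullet> snd z" for z :: state
  by (simp add: power2_norm_eq_inner inner_prod_def)

lemma eigenvalues_block_op: "eigenvalues_op (block_op a b b d) = {c. (a - c) * (d - c) = b\<^sup>2}"
proof (intro set_eqI iffI; simp only: mem_Collect_eq)
  fix c assume "c \<in> eigenvalues_op (block_op a b b d)"
  then obtain x y where "(x, y) \<noteq> 0" and "block_op a b b d (x, y) = c *\<^sub>R (x, y)"
    unfolding eigenvalues_op_def by auto
  then have xy: "(x, y) \<noteq> 0" and ex: "(a - c) *\<^sub>R x + b *\<^sub>R y = 0" and ey: "b *\<^sub>R x + (d - c) *\<^sub>R y = 0"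
    by (auto simp: block_op_def algebra_simps)
  have "((a - c) * (d - c) - b\<^sup>2) *\<^sub>R x = (d - c) *\<^sub>R ((a - c) *\<^sub>R x + b *\<^sub>R y) - b *\<^sub>R (b *\<^sub>R x + (d - c) *\<^sub>R y)"
    and "((a - c) * (d - c) - b\<^sup>2) *\<^sub>R y = (a - c) *\<^sub>R (b *\<^sub>R x + (d - c) *\<^sub>R y) - b *\<^sub>R ((a - c) *\<^sub>R x + b *\<^sub>R y)"
    by (simp_all add: algebra_simps power2_eq_square)
  then show "(a - c) * (d - c) = b\<^sup>2" using xy ex ey by (auto simp: zero_prod_def)
next
  fix c assume root: "(a - c) * (d - c) = b\<^sup>2"
  define e :: vec3 where "e = axis 1 1"
  have "e \<noteq> 0" by (simp add: e_def)
  define v :: state where "v = (if b = 0 \<and> c = a then (e, 0) else (b *\<^sub>R e, (c - a) *\<^sub>R e))"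
  have "v \<noteq> 0" using \<open>e \<noteq> 0\<close> by (auto simp: v_def zero_prod_def)
  moreover have "block_op a b b d v = c *\<^sub>R v"
  proof -
    have "b * b + d * (c - a) = c * (c - a)" using root by (simp add: power2_eq_square algebra_simps)
    then show ?thesis
      by (auto simp: v_def block_op_def algebra_simps simp flip: scaleR_add_left)
  qed
  ultimately show "c \<in> eigenvalues_op (block_op a b b d)" unfolding eigenvalues_op_def by blast
qed

lemma symmetric_quadratic_root_iff:
  fixes a b c d :: real
  defines "s \<equiv> sqrt (((a - d) / 2)\<^sup>2 + b\<^sup>2)"
  shows "(a - c) * (d - c) = b\<^sup>2 \<longleftrightarrow> c = (a + d) / 2 - s \<or> c = (a + d) / 2 + s"
proof -
  have "s\<^sup>2 = ((a - d) / 2)\<^sup>2 + b\<^sup>2"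
    unfolding s_def by (rule real_sqrt_pow2) simp
  then have "(a - c) * (d - c) - b\<^sup>2 = (c - (a + d) / 2)\<^sup>2 - s\<^sup>2"
    by (simp add: power2_eq_square field_simps)
  then have "(a - c) * (d - c) = b\<^sup>2 \<longleftrightarrow> (c - (a + d) / 2)\<^sup>2 = s\<^sup>2" by linarith
  also have "\<dots> \<longleftrightarrow> c - (a + d) / 2 = s \<or> c - (a + d) / 2 = - s"
    by (simp add: power2_eq_iff)
  finally show ?thesis by linarith
qed

lemma
  fixes a b d :: real
  defines "s \<equiv> sqrt (((a - d) / 2)\<^sup>2 + b\<^sup>2)"
  shows lambda_min_block_op: "lambda_min (block_op a b b d) = (a + d) / 2 - s"
    and lambda_max_block_op: "lambda_max (block_op a b b d) = (a + d) / 2 + s"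
proof -
  have "eigenvalues_op (block_op a b b d) = {(a + d) / 2 - s, (a + d) / 2 + s}"
    unfolding eigenvalues_block_op symmetric_quadratic_root_iff s_def by auto
  moreover have "0 \<le> s" by (simp add: s_def)
  ultimately show "lambda_min (block_op a b b d) = (a + d) / 2 - s"
    and "lambda_max (block_op a b b d) = (a + d) / 2 + s"
    by (simp_all add: lambda_min_def lambda_max_def min_def max_def)
qed

lemma block_op_eigenvalue_bounds:
  shows "lambda_min (block_op a b b d) \<le> a" "lambda_min (block_op a b b d) \<le> d"
    and "a \<le> lambda_max (block_op a b b d)" "d \<le> lambda_max (block_op a b b d)"
proof -
  define s where "s = sqrt (((a - d) / 2)\<^sup>2 + b\<^sup>2)"
  have "\<bar>(a - d) / 2\<bar> \<le> s" unfolding s_def by (rule real_sqrt_ge_abs1)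
  then have "(a - d) / 2 \<le> s" "- ((a - d) / 2) \<le> s"
    unfolding abs_le_iff by blast+
  moreover note lambda_min_block_op[of a b d, folded s_def] lambda_max_block_op[of a b d, folded s_def]
  ultimately show "lambda_min (block_op a b b d) \<le> a" "lambda_min (block_op a b b d) \<le> d"
    and "a \<le> lambda_max (block_op a b b d)" "d \<le> lambda_max (block_op a b b d)"
    by (simp_all add: field_simps)
qed

lemma block_op_eigenvalue_roots:
  shows "(a - lambda_min (block_op a b b d)) * (d - lambda_min (block_op a b b d)) = b\<^sup>2"
    and "(a - lambda_max (block_op a b b d)) * (d - lambda_max (block_op a b b d)) = b\<^sup>2"
  unfolding lambda_min_block_op lambda_max_block_op symmetric_quadratic_root_iff by simp_all

lemma lambda_min_block_op_le_inner:
  "lambda_min (block_op a b b d) * (norm z)\<^sup>2 \<le> z \<bullet> block_op a b b d z"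
proof -
  let ?l = "lambda_min (block_op a b b d)"
  have "0 \<le> (a - ?l) * (fst z \<bullet> fst z) + 2 * b * (fst z \<bullet> snd z) + (d - ?l) * (snd z \<bullet> snd z)"
    using block_op_eigenvalue_bounds block_op_eigenvalue_roots by (intro inner_form_nonneg) auto
  then show ?thesis by (simp add: inner_block_op norm_state_squared algebra_simps)
qed

lemma inner_le_lambda_max_block_op:
  "z \<bullet> block_op a b b d z \<le> lambda_max (block_op a b b d) * (norm z)\<^sup>2"
proof -
  let ?l = "lambda_max (block_op a b b d)"
  have "0 \<le> (?l - a) * (fst z \<bullet> fst z) + 2 * (- b) * (fst z \<bullet> snd z) + (?l - d) * (snd z \<bullet> snd z)"
    using block_op_eigenvalue_bounds block_op_eigenvalue_roots
    by (intro inner_form_nonneg) (auto simp: algebra_simps)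
  moreover have "?l * (norm z)\<^sup>2 - z \<bullet> block_op a b b d z
      = (?l - a) * (fst z \<bullet> fst z) + 2 * (- b) * (fst z \<bullet> snd z) + (?l - d) * (snd z \<bullet> snd z)"
    by (simp add: inner_block_op norm_state_squared algebra_simps)
  ultimately show ?thesis by linarith
qed

lemma lambda_min_block_op_pos:
  assumes "0 < a" "b\<^sup>2 < a * d"
  shows "0 < lambda_min (block_op a b b d)"
proof (rule ccontr)
  let ?l = "lambda_min (block_op a b b d)"
  assume "\<not> 0 < ?l"
  moreover have "0 < a * d" using assms(2) zero_le_power2[of b] by linarith
  then have "0 < d" using assms(1) by (simp add: zero_less_mult_iff)
  ultimately have "a * d \<le> (a - ?l) * (d - ?l)" using assms by (intro mult_mono) auto
  then show False using assms block_op_eigenvalue_roots(1)[of a b d] by simp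
qed

section \<open>Exponential bounds from differential inequalities\<close>

lemma has_real_derivative_inner_self:
  fixes g :: "real \<Rightarrow> 'a::real_inner"
  assumes "(g has_vector_derivative g') (at s within S)"
  shows "((\<lambda>s. g s \<bullet> g s) has_real_derivative 2 * (g s \<bullet> g')) (at s within S)"
proof -
  have "((\<lambda>s. g s \<bullet> g s) has_derivative (\<lambda>h. g s \<bullet> (h *\<^sub>R g') + (h *\<^sub>R g') \<bullet> g s)) (at s within S)"
    using assms unfolding has_vector_derivative_def by (intro has_derivative_inner)
  then show ?thesis unfolding has_field_derivative_def
    by (rule has_derivative_eq_rhs) (auto simp: fun_eq_iff inner_commute algebra_simps)
qed

lemma DERIV_within_nonneg_imp_le:
  fixes h :: "real \<Rightarrow> real"
  assumes "a \<le> b"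
    and h': "\<And>s. s \<in> {a..b} \<Longrightarrow> (h has_real_derivative h' s) (at s within {a..b})"
    and "\<And>s. s \<in> {a..b} \<Longrightarrow> 0 \<le> h' s"
  shows "h a \<le> h b"
proof (rule DERIV_nonneg_imp_increasing_open[OF \<open>a \<le> b\<close>])
  fix s assume "a < s" "s < b"
  then have "at s within {a..b} = at s" by (simp add: at_within_Icc_at)
  then show "\<exists>y. (h has_real_derivative y) (at s) \<and> 0 \<le> y"
    using h' assms(3) \<open>a < s\<close> \<open>s < b\<close> by (metis atLeastAtMost_iff less_imp_le)
next
  show "continuous_on {a..b} h"
    unfolding continuous_on_eq_continuous_within using h' DERIV_continuous by blast
qed

lemma exp_weighted_le:
  fixes v :: "real \<Rightarrow> real"
  assumes "a \<le> b"
    and v': "\<And>s. s \<in> {a..b} \<Longrightarrow> (v has_real_derivative v' s) (at s within {a..b})"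
    and "\<And>s. s \<in> {a..b} \<Longrightarrow> c * v s \<le> v' s"
  shows "exp (- c * a) * v a \<le> exp (- c * b) * v b"
proof (rule DERIV_within_nonneg_imp_le[where h = "\<lambda>s. exp (- c * s) * v s", OF \<open>a \<le> b\<close>])
  show "((\<lambda>s. exp (- c * s) * v s) has_real_derivative exp (- c * s) * (v' s - c * v s)) (at s within {a..b})"
    if "s \<in> {a..b}" for s
    by (rule derivative_eq_intros v'[OF that] refl | simp)+ (simp add: algebra_simps)
  show "0 \<le> exp (- c * s) * (v' s - c * v s)" if "s \<in> {a..b}" for s
    using assms(3)[OF that] by simp
qed

lemma inner_self_exp_decay:
  fixes g :: "real \<Rightarrow> 'a::real_inner"
  assumes "a \<le> b"
    and g': "\<And>s. s \<in> {a..b} \<Longrightarrow> (g has_vector_derivative g' s) (at s within {a..b})"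
    and "\<And>s. s \<in> {a..b} \<Longrightarrow> 2 * (g s \<bullet> g' s) \<le> - c * (g s \<bullet> g s)"
  shows "g b \<bullet> g b \<le> exp (- c * (b - a)) * (g a \<bullet> g a)"
proof -
  have "exp (- (- c) * a) * - (g a \<bullet> g a) \<le> exp (- (- c) * b) * - (g b \<bullet> g b)"
  proof (rule exp_weighted_le[where v = "\<lambda>s. - (g s \<bullet> g s)" and c = "- c", OF \<open>a \<le> b\<close>])
    show "((\<lambda>s. - (g s \<bullet> g s)) has_real_derivative - (2 * (g s \<bullet> g' s))) (at s within {a..b})"
      if "s \<in> {a..b}" for s
      using has_real_derivative_inner_self[OF g'[OF that]] by (rule DERIV_minus)
    show "- c * - (g s \<bullet> g s) \<le> - (2 * (g s \<bullet> g' s))" if "s \<in> {a..b}" for s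
      using assms(3)[OF that] by simp
  qed
  then have "exp (- c * b) * (exp (c * b) * (g b \<bullet> g b)) \<le> exp (- c * b) * (exp (c * a) * (g a \<bullet> g a))"
    by simp
  then show ?thesis by (simp add: mult.assoc[symmetric] algebra_simps flip: exp_add)
qed

lemma inner_self_exp_growth_backward:
  fixes g :: "real \<Rightarrow> 'a::real_inner"
  assumes "a \<le> b"
    and g': "\<And>s. s \<in> {a..b} \<Longrightarrow> (g has_vector_derivative g' s) (at s within {a..b})"
    and "\<And>s. s \<in> {a..b} \<Longrightarrow> - c * (g s \<bullet> g s) \<le> 2 * (g s \<bullet> g' s)"
  shows "g a \<bullet> g a \<le> exp (c * (b - a)) * (g b \<bullet> g b)"
proof -
  have "exp (- (- c) * a) * (g a \<bullet> g a) \<le> exp (- (- c) * b) * (g b \<bullet> g b)"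
  proof (rule exp_weighted_le[where v = "\<lambda>s. g s \<bullet> g s" and c = "- c", OF \<open>a \<le> b\<close>])
    show "((\<lambda>s. g s \<bullet> g s) has_real_derivative 2 * (g s \<bullet> g' s)) (at s within {a..b})"
      if "s \<in> {a..b}" for s
      using g'[OF that] by (rule has_real_derivative_inner_self)
    show "- c * (g s \<bullet> g s) \<le> 2 * (g s \<bullet> g' s)" if "s \<in> {a..b}" for s
      using assms(3)[OF that] .
  qed
  then have "exp (- c * a) * (exp (c * a) * (g a \<bullet> g a)) \<le> exp (- c * a) * (exp (c * b) * (g b \<bullet> g b))"
    by simp
  then show ?thesis by (simp add: mult.assoc[symmetric] algebra_simps flip: exp_add)
qed

lemma norm_le_exp_of_inner_le:
  fixes x y :: "'a::real_inner"
  assumes "x \<bullet> x \<le> exp (2 * c) * (y \<bullet> y)"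
  shows "norm x \<le> exp c * norm y"
proof (rule power2_le_imp_le)
  show "(norm x)\<^sup>2 \<le> (exp c * norm y)\<^sup>2"
    using assms by (simp add: power2_norm_eq_inner power_mult_distrib flip: exp_double)
qed simp

section \<open>The Lyapunov function of the closed loop\<close>

lemma closed_loop_eq_ltv_field: "closed_loop P \<mu> r rs \<beta> k1 k2 = ltv_field \<beta> k1 k2"
  by (simp add: fun_eq_iff closed_loop_def u_relieved_def ltv_field_def)

definition lyap_coords :: "real \<Rightarrow> state \<Rightarrow> state" where
  "lyap_coords k1 z = (fst z, k1 *\<^sub>R fst z + snd z)"

lemma bounded_linear_lyap_coords: "bounded_linear (lyap_coords k1)"
  unfolding lyap_coords_def
  by (intro bounded_linear_Pair bounded_linear_add bounded_linear_fst bounded_linear_snd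
      bounded_linear_compose[OF bounded_linear_scaleR_right bounded_linear_fst])

lemma inner_lyap_coords: "lyap_coords k1 z \<bullet> lyap_coords k1 z = z \<bullet> Xmat k1 z"
  unfolding lyap_coords_def Xmat_def inner_block_op
  by (simp add: inner_add_left inner_add_right inner_commute[of "snd z" "fst z"] power2_eq_square algebra_simps)

lemma inner_Umat_affine:
  "z \<bullet> Umat k1 k2 b z = b * (2 * ((k1 + k1\<^sup>2 * k2) * (fst z \<bullet> fst z)
      + (k1\<^sup>2 + 2 * k1 * k2 + 1) * (fst z \<bullet> snd z) + (k1 + k2) * (snd z \<bullet> snd z)))
    - 2 * ((k1\<^sup>2 + 1) * (fst z \<bullet> snd z) + k1 * (snd z \<bullet> snd z))"
  unfolding Umat_def inner_block_op by (simp add: algebra_simps)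

lemma lyap_coords_derivative:
  "2 * (lyap_coords k1 z \<bullet> lyap_coords k1 (ltv_field \<beta> k1 k2 s z)) = - (z \<bullet> Umat k1 k2 (\<beta> s) z)"
  unfolding lyap_coords_def ltv_field_def inner_Umat_affine
  by (simp add: inner_add_left inner_add_right inner_diff_right inner_commute[of "snd z" "fst z"]
      power2_eq_square algebra_simps)

lemma inner_Umat_one:
  "z \<bullet> Umat k1 k2 1 z
    = 2 * k1 * (fst z \<bullet> fst z) + 2 * k2 * (snd (lyap_coords k1 z) \<bullet> snd (lyap_coords k1 z))"
  unfolding lyap_coords_def Umat_def inner_block_op
  by (simp add: inner_add_left inner_add_right inner_commute[of "snd z" "fst z"] power2_eq_square algebra_simps)

lemma inner_Umat_ge_min:
  assumes "b0 \<le> b" "b \<le> b1"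
  shows "min (z \<bullet> Umat k1 k2 b0 z) (z \<bullet> Umat k1 k2 b1 z) \<le> z \<bullet> Umat k1 k2 b z"
proof -
  define K where "K = 2 * ((k1 + k1\<^sup>2 * k2) * (fst z \<bullet> fst z)
      + (k1\<^sup>2 + 2 * k1 * k2 + 1) * (fst z \<bullet> snd z) + (k1 + k2) * (snd z \<bullet> snd z))"
  have "b0 * K \<le> b * K \<or> b1 * K \<le> b * K"
  proof (cases "0 \<le> K")
    case True
    then show ?thesis using assms(1) mult_right_mono by blast
  next
    case False
    then show ?thesis using assms(2) mult_right_mono_neg[of b b1 K] by simp
  qed
  then show ?thesis unfolding inner_Umat_affine K_def[symmetric] by linarith
qed

definition det_Umat :: "real \<Rightarrow> real \<Rightarrow> real \<Rightarrow> real" where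
  "det_Umat k1 k2 b = (2 * (k1 + k1\<^sup>2 * k2) * b) * (2 * ((k1 + k2) * b - k1))
     - ((k1\<^sup>2 + 2 * k1 * k2 + 1) * b - k1\<^sup>2 - 1)\<^sup>2"

lemma det_Umat_quadratic:
  "det_Umat k1 k2 b = (- ((k1\<^sup>2 - 1)\<^sup>2)) * b\<^sup>2 + 2 * (k1 ^ 4 + 2 * k1 * k2 + 1) * b + (- ((1 + k1\<^sup>2)\<^sup>2))"
  by (simp add: det_Umat_def power2_eq_square power4_eq_xxxx algebra_simps)

lemma det_Umat_beta_crit:
  assumes "0 < k1" "0 < k2"
  shows "det_Umat k1 k2 (beta_crit k1 k2) = 0"
proof (cases "k1 = 1")
  case True
  then show ?thesis
    using assms by (simp add: det_Umat_quadratic beta_crit_def field_simps power2_eq_square)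
next
  case False
  define A where "A = k1 ^ 4 + 2 * k1 * k2 + 1"
  define S where "S = sqrt ((k1 * k2 + 1) * (k1 * k2 + k1 ^ 4))"
  define D where "D = (k1\<^sup>2 - 1)\<^sup>2"
  have "S\<^sup>2 = (k1 * k2 + 1) * (k1 * k2 + k1 ^ 4)"
    unfolding S_def using assms by (intro real_sqrt_pow2) simp
  then have discriminant: "A\<^sup>2 - 4 * S\<^sup>2 = (1 + k1\<^sup>2)\<^sup>2 * D"
    unfolding A_def D_def by (simp add: power2_eq_square power4_eq_xxxx algebra_simps)
  have "k1\<^sup>2 \<noteq> 1" using False assms by (auto simp: power2_eq_1_iff)
  then have "0 < D" unfolding D_def by simp
  have "beta_crit k1 k2 = (A - 2 * S) / D"
    unfolding beta_crit_def A_def S_def D_def using False by simp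
  then have D_beta_crit: "D * beta_crit k1 k2 = A - 2 * S" using \<open>0 < D\<close> by simp
  have "D * det_Umat k1 k2 (beta_crit k1 k2)
      = - (D * beta_crit k1 k2)\<^sup>2 + 2 * A * (D * beta_crit k1 k2) - (1 + k1\<^sup>2)\<^sup>2 * D"
    unfolding det_Umat_quadratic A_def[symmetric] D_def[symmetric] by (simp add: power2_eq_square algebra_simps)
  also have "\<dots> = A\<^sup>2 - 4 * S\<^sup>2 - (1 + k1\<^sup>2)\<^sup>2 * D"
    unfolding D_beta_crit by (simp add: power2_eq_square algebra_simps)
  finally show ?thesis using discriminant \<open>0 < D\<close> by simp
qed

lemma concave_quadratic_pos_between:
  fixes A B C x y z :: real
  assumes "A \<le> 0" "x < z" "z \<le> y" "0 \<le> A * x\<^sup>2 + B * x + C" "0 < A * y\<^sup>2 + B * y + C"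
  shows "0 < A * z\<^sup>2 + B * z + C"
proof -
  have "(y - x) * (A * z\<^sup>2 + B * z + C) = (y - z) * (A * x\<^sup>2 + B * x + C) + (z - x) * (A * y\<^sup>2 + B * y + C)
      + (- A) * ((z - x) * (y - z) * (y - x))"
    by (simp add: power2_eq_square algebra_simps)
  also have "0 < \<dots>"
  proof -
    have "0 \<le> (y - z) * (A * x\<^sup>2 + B * x + C)" using assms by simp
    moreover have "0 < (z - x) * (A * y\<^sup>2 + B * y + C)" using assms by simp
    moreover have "0 \<le> (- A) * ((z - x) * (y - z) * (y - x))"
      using assms by (intro mult_nonneg_nonneg) auto
    ultimately show ?thesis by linarith
  qed
  finally show ?thesis using assms by (simp add: zero_less_mult_iff)
qed

lemma lambda_min_Umat_pos:
  assumes "0 < k1" "0 < k2" "beta_crit k1 k2 < b" "b \<le> 1"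
  shows "0 < lambda_min (Umat k1 k2 b)"
proof -
  have "0 < det_Umat k1 k2 b"
    unfolding det_Umat_quadratic
  proof (rule concave_quadratic_pos_between[where x = "beta_crit k1 k2" and y = 1])
    show "0 \<le> (- ((k1\<^sup>2 - 1)\<^sup>2)) * (beta_crit k1 k2)\<^sup>2 + 2 * (k1 ^ 4 + 2 * k1 * k2 + 1) * beta_crit k1 k2
        + (- ((1 + k1\<^sup>2)\<^sup>2))"
      using det_Umat_beta_crit[OF assms(1,2)] unfolding det_Umat_quadratic by simp
    have at_one: "(- ((k1\<^sup>2 - 1)\<^sup>2)) * 1\<^sup>2 + 2 * (k1 ^ 4 + 2 * k1 * k2 + 1) * 1 + (- ((1 + k1\<^sup>2)\<^sup>2))
        = 4 * k1 * k2"
      by (simp add: power2_eq_square power4_eq_xxxx algebra_simps)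
    show "0 < (- ((k1\<^sup>2 - 1)\<^sup>2)) * 1\<^sup>2 + 2 * (k1 ^ 4 + 2 * k1 * k2 + 1) * 1 + (- ((1 + k1\<^sup>2)\<^sup>2))"
      unfolding at_one using assms by simp
  qed (use assms in auto)
  have "0 < b"
  proof (rule ccontr)
    assume "\<not> 0 < b"
    have "0 < k1 ^ 4 + 2 * k1 * k2 + 1" using assms by (intro add_nonneg_pos add_nonneg_nonneg) auto
    then have "2 * (k1 ^ 4 + 2 * k1 * k2 + 1) * b \<le> 0"
      using \<open>\<not> 0 < b\<close> by (intro mult_nonneg_nonpos) auto
    moreover have "(- ((k1\<^sup>2 - 1)\<^sup>2)) * b\<^sup>2 \<le> 0" "- ((1 + k1\<^sup>2)\<^sup>2) \<le> 0" by simp_all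
    ultimately have "det_Umat k1 k2 b \<le> 0" unfolding det_Umat_quadratic by linarith
    with \<open>0 < det_Umat k1 k2 b\<close> show False by simp
  qed
  show ?thesis unfolding Umat_def
  proof (rule lambda_min_block_op_pos)
    show "0 < 2 * (k1 + k1\<^sup>2 * k2) * b" using assms \<open>0 < b\<close> by (intro mult_pos_pos add_pos_pos) auto
    show "((k1\<^sup>2 + 2 * k1 * k2 + 1) * b - k1\<^sup>2 - 1)\<^sup>2 < 2 * (k1 + k1\<^sup>2 * k2) * b * (2 * ((k1 + k2) * b - k1))"
      using \<open>0 < det_Umat k1 k2 b\<close> unfolding det_Umat_def by simp
  qed
qed

lemma lambda_min_Umat_le:
  assumes "0 < k1" "0 < k2" "b \<le> 1"
  shows "lambda_min (Umat k1 k2 b) \<le> 2 * k1" and "lambda_min (Umat k1 k2 b) \<le> 2 * k2"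
proof -
  let ?l = "lambda_min (Umat k1 k2 b)"
  define e :: vec3 where "e = axis 1 1"
  have "e \<bullet> e = 1" by (simp add: e_def inner_axis_axis)
  have "?l * (norm (e, - k1 *\<^sub>R e))\<^sup>2 \<le> (e, - k1 *\<^sub>R e) \<bullet> Umat k1 k2 b (e, - k1 *\<^sub>R e)"
    unfolding Umat_def by (rule lambda_min_block_op_le_inner)
  moreover have "(norm (e, - k1 *\<^sub>R e))\<^sup>2 = 1 + k1\<^sup>2"
    unfolding norm_state_squared using \<open>e \<bullet> e = 1\<close> by (simp add: power2_eq_square)
  ultimately have "?l * (1 + k1\<^sup>2) \<le> 2 * k1"
    using \<open>e \<bullet> e = 1\<close> by (simp add: inner_Umat_affine power2_eq_square algebra_simps)
  moreover have "?l \<le> ?l * (1 + k1\<^sup>2)" if "0 \<le> ?l"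
    using mult_left_mono[of 1 "1 + k1\<^sup>2" ?l] that by simp
  ultimately show "?l \<le> 2 * k1" using assms(1) by fastforce
  have "?l * (norm (0::vec3, e))\<^sup>2 \<le> (0, e) \<bullet> Umat k1 k2 b (0, e)"
    unfolding Umat_def by (rule lambda_min_block_op_le_inner)
  moreover have "(norm (0::vec3, e))\<^sup>2 = 1" unfolding norm_state_squared using \<open>e \<bullet> e = 1\<close> by simp
  ultimately have "?l \<le> 2 * (b * (k1 + k2)) - 2 * k1"
    using \<open>e \<bullet> e = 1\<close> by (simp add: inner_Umat_affine norm_state_squared algebra_simps)
  also have "\<dots> \<le> 2 * k2"
  proof -
    have "b * (k1 + k2) \<le> k1 + k2" using assms mult_right_mono[of b 1 "k1 + k2"] by simp
    then show ?thesis by linarith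
  qed
  finally show "?l \<le> 2 * k2" .
qed

lemma lambda_min_Xmat_pos: "0 < lambda_min (Xmat k1)"
  unfolding Xmat_def by (rule lambda_min_block_op_pos) (simp_all add: add_pos_nonneg)

lemma lambda_max_Xmat_ge_one: "1 \<le> lambda_max (Xmat k1)"
  unfolding Xmat_def by (rule block_op_eigenvalue_bounds(4))

lemma Umat_dominates_Xmat:
  assumes "0 < k1" "0 < k2" "beta_crit k1 k2 < bmin" "bmin \<le> b" "b \<le> 1"
  shows "2 * theta_const k1 k2 bmin * (z \<bullet> Xmat k1 z) \<le> z \<bullet> Umat k1 k2 b z"
proof -
  define lU where "lU = lambda_min (Umat k1 k2 bmin)"
  define lX where "lX = lambda_max (Xmat k1)"
  define c where "c = lU / lX"
  have "0 < lU" unfolding lU_def using assms by (intro lambda_min_Umat_pos) auto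
  have "1 \<le> lX" unfolding lX_def by (rule lambda_max_Xmat_ge_one)
  have "0 \<le> c" "c \<le> lU" using \<open>0 < lU\<close> \<open>1 \<le> lX\<close> by (auto simp: c_def divide_le_eq)
  have at_bmin: "c * (z \<bullet> Xmat k1 z) \<le> z \<bullet> Umat k1 k2 bmin z"
  proof -
    have "c * (z \<bullet> Xmat k1 z) \<le> c * (lX * (norm z)\<^sup>2)"
      unfolding lX_def Xmat_def using \<open>0 \<le> c\<close> by (intro mult_left_mono inner_le_lambda_max_block_op)
    also have "\<dots> = lU * (norm z)\<^sup>2" using \<open>1 \<le> lX\<close> by (simp add: c_def)
    also have "\<dots> \<le> z \<bullet> Umat k1 k2 bmin z" unfolding lU_def Umat_def by (rule lambda_min_block_op_le_inner)
    finally show ?thesis .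
  qed
  have at_one: "c * (z \<bullet> Xmat k1 z) \<le> z \<bullet> Umat k1 k2 1 z"
  proof -
    have "bmin \<le> 1" using assms(4,5) by simp
    then have "c \<le> 2 * k1" "c \<le> 2 * k2"
      using \<open>c \<le> lU\<close> lambda_min_Umat_le[OF assms(1,2)] unfolding lU_def by (meson order_trans)+
    then have "c * (fst z \<bullet> fst z) \<le> 2 * k1 * (fst z \<bullet> fst z)"
      and "c * (snd (lyap_coords k1 z) \<bullet> snd (lyap_coords k1 z))
        \<le> 2 * k2 * (snd (lyap_coords k1 z) \<bullet> snd (lyap_coords k1 z))"
      by (simp_all add: mult_right_mono)
    moreover have "z \<bullet> Xmat k1 z = fst z \<bullet> fst z + snd (lyap_coords k1 z) \<bullet> snd (lyap_coords k1 z)"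
      unfolding inner_lyap_coords[symmetric] by (simp add: lyap_coords_def)
    ultimately show ?thesis unfolding inner_Umat_one by (simp add: distrib_left)
  qed
  have "c * (z \<bullet> Xmat k1 z) \<le> min (z \<bullet> Umat k1 k2 bmin z) (z \<bullet> Umat k1 k2 1 z)"
    using at_bmin at_one by (rule min.boundedI)
  also have "\<dots> \<le> z \<bullet> Umat k1 k2 b z" using assms(4,5) by (rule inner_Umat_ge_min)
  also have "c = 2 * theta_const k1 k2 bmin"
    unfolding theta_const_def c_def lU_def lX_def by simp
  finally show ?thesis .
qed

lemma rho_const_pos: "0 < rho_const k1"
  using lambda_min_Xmat_pos[of k1] lambda_max_Xmat_ge_one[of k1] unfolding rho_const_def by simp

lemma theta_const_pos:
  assumes "0 < k1" "0 < k2" "beta_crit k1 k2 < bmin" "bmin \<le> 1"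
  shows "0 < theta_const k1 k2 bmin"
  using lambda_min_Umat_pos[OF assms] lambda_max_Xmat_ge_one[of k1] unfolding theta_const_def by simp

lemma ltv_field_lyapunov_decay:
  assumes "0 < k1" "0 < k2" "beta_crit k1 k2 < bmin"
    and \<beta>: "\<And>s. s \<in> {0..T} \<Longrightarrow> bmin \<le> \<beta> s \<and> \<beta> s \<le> 1"
    and z': "\<And>s. s \<in> {0..T} \<Longrightarrow> (z has_vector_derivative ltv_field \<beta> k1 k2 s (z s)) (at s within {0..T})"
    and t: "t \<in> {0..T}"
  shows "z t \<bullet> Xmat k1 (z t) \<le> exp (2 * (- theta_const k1 k2 bmin * t)) * (z 0 \<bullet> Xmat k1 (z 0))"
proof -
  let ?\<theta> = "theta_const k1 k2 bmin"
  have "z t \<bullet> Xmat k1 (z t) \<le> exp (- (2 * ?\<theta>) * (t - 0)) * (z 0 \<bullet> Xmat k1 (z 0))"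
    unfolding inner_lyap_coords[symmetric]
  proof (rule inner_self_exp_decay[where g = "\<lambda>s. lyap_coords k1 (z s)"])
    show "0 \<le> t" using t by simp
    show "((\<lambda>s. lyap_coords k1 (z s)) has_vector_derivative lyap_coords k1 (ltv_field \<beta> k1 k2 s (z s)))
        (at s within {0..t})" if "s \<in> {0..t}" for s
    proof -
      have "(z has_vector_derivative ltv_field \<beta> k1 k2 s (z s)) (at s within {0..T})"
        using z' that t by simp
      then have "(z has_vector_derivative ltv_field \<beta> k1 k2 s (z s)) (at s within {0..t})"
        by (rule has_vector_derivative_within_subset) (use t in auto)
      then show ?thesis by (rule bounded_linear.has_vector_derivative[OF bounded_linear_lyap_coords])
    qed
    show "2 * (lyap_coords k1 (z s) \<bullet> lyap_coords k1 (ltv_field \<beta> k1 k2 s (z s)))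
        \<le> - (2 * ?\<theta>) * (lyap_coords k1 (z s) \<bullet> lyap_coords k1 (z s))" if "s \<in> {0..t}" for s
      unfolding lyap_coords_derivative inner_lyap_coords
      using Umat_dominates_Xmat[OF assms(1-3)] \<beta>[of s] that t by auto
  qed
  then show ?thesis by (simp add: mult.assoc)
qed

lemma ltv_field_exponential_bound:
  assumes "0 < k1" "0 < k2" "beta_crit k1 k2 < bmin"
    and "\<And>s. s \<in> {0..T} \<Longrightarrow> bmin \<le> \<beta> s \<and> \<beta> s \<le> 1"
    and "\<And>s. s \<in> {0..T} \<Longrightarrow> (z has_vector_derivative ltv_field \<beta> k1 k2 s (z s)) (at s within {0..T})"
    and "t \<in> {0..T}"
  shows "norm (z t) \<le> rho_const k1 * norm (z 0) * exp (- theta_const k1 k2 bmin * t)"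
proof -
  let ?\<theta> = "theta_const k1 k2 bmin"
  let ?lmin = "lambda_min (Xmat k1)" and ?lmax = "lambda_max (Xmat k1)"
  have "?lmin * (norm (z t))\<^sup>2 \<le> z t \<bullet> Xmat k1 (z t)"
    unfolding Xmat_def by (rule lambda_min_block_op_le_inner)
  also have "\<dots> \<le> exp (2 * (- ?\<theta> * t)) * (z 0 \<bullet> Xmat k1 (z 0))"
    using assms by (rule ltv_field_lyapunov_decay)
  also have "\<dots> \<le> exp (2 * (- ?\<theta> * t)) * (?lmax * (norm (z 0))\<^sup>2)"
    unfolding Xmat_def by (intro mult_left_mono inner_le_lambda_max_block_op) simp
  finally have "(norm (z t))\<^sup>2 \<le> ?lmax / ?lmin * (norm (z 0))\<^sup>2 * exp (2 * (- ?\<theta> * t))"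
    using lambda_min_Xmat_pos[of k1] by (simp add: le_divide_eq mult_ac)
  also have "\<dots> = (rho_const k1 * norm (z 0) * exp (- ?\<theta> * t))\<^sup>2"
  proof -
    have "(rho_const k1)\<^sup>2 = ?lmax / ?lmin"
      using lambda_min_Xmat_pos[of k1] lambda_max_Xmat_ge_one[of k1] unfolding rho_const_def by simp
    then show ?thesis by (simp only: power_mult_distrib exp_double)
  qed
  finally have "(norm (z t))\<^sup>2 \<le> (rho_const k1 * norm (z 0) * exp (- ?\<theta> * t))\<^sup>2" .
  then show ?thesis by (rule power2_le_imp_le) (use rho_const_pos[of k1] in simp)
qed

section \<open>Initial states of trajectories meeting a curve\<close>

lemma norm_diff_le_of_vector_derivative_bound:
  fixes f :: "real \<Rightarrow> 'a::real_normed_vector"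
  assumes "convex S"
    and f': "\<And>s. s \<in> S \<Longrightarrow> (f has_vector_derivative f' s) (at s within S)"
    and "\<And>s. s \<in> S \<Longrightarrow> norm (f' s) \<le> B"
    and "x \<in> S" "y \<in> S"
  shows "norm (f x - f y) \<le> B * \<bar>x - y\<bar>"
proof -
  have "norm (f x - f y) \<le> B * norm (x - y)"
  proof (rule differentiable_bound[OF \<open>convex S\<close> _ _ \<open>x \<in> S\<close> \<open>y \<in> S\<close>])
    show "(f has_derivative (\<lambda>h. h *\<^sub>R f' s)) (at s within S)" if "s \<in> S" for s
      using f'[OF that] unfolding has_vector_derivative_def .
    show "onorm (\<lambda>h. h *\<^sub>R f' s) \<le> B" if "s \<in> S" for s
      using assms(3)[OF that] by (simp add: onorm_scaleR_left onorm_id bounded_linear_ident)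
  qed
  then show ?thesis by simp
qed

lemma lipschitz_on_Icc_of_continuous_derivative:
  fixes w :: "real \<Rightarrow> 'a::real_normed_vector"
  assumes w': "\<And>t. 0 \<le> t \<Longrightarrow> (w has_vector_derivative w' t) (at t within {0..})"
    and "continuous_on {0..} w'"
  obtains M where "0 \<le> M" "\<And>a b. a \<in> {0..N} \<Longrightarrow> b \<in> {0..N} \<Longrightarrow> norm (w a - w b) \<le> M * \<bar>a - b\<bar>"
proof -
  have "bounded (w' ` {0..N})"
    by (rule compact_imp_bounded, rule compact_continuous_image)
      (use assms(2) in \<open>auto intro: continuous_on_subset\<close>)
  then obtain M where "0 < M" and M: "\<And>s. s \<in> {0..N} \<Longrightarrow> norm (w' s) \<le> M"
    unfolding bounded_pos by auto
  have "norm (w a - w b) \<le> M * \<bar>a - b\<bar>" if "a \<in> {0..N}" "b \<in> {0..N}" for a b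
  proof (rule norm_diff_le_of_vector_derivative_bound[OF convex_real_interval(5) _ M that])
    show "(w has_vector_derivative w' s) (at s within {0..N})" if "s \<in> {0..N}" for s
      using w'[of s] that by (auto intro: has_vector_derivative_within_subset)
  qed
  with \<open>0 < M\<close> show ?thesis by (intro that[of M]) auto
qed

lemma C1_nonneg_diff:
  assumes "C1_nonneg f" "C1_nonneg g"
  shows "C1_nonneg (\<lambda>t. f t - g t)"
proof -
  obtain f' g' where
    "\<forall>t\<ge>0. (f has_vector_derivative f' t) (at t within {0..})" "continuous_on {0..} f'"
    "\<forall>t\<ge>0. (g has_vector_derivative g' t) (at t within {0..})" "continuous_on {0..} g'"
    using assms unfolding C1_nonneg_def by blast
  then show ?thesis unfolding C1_nonneg_def
    by (intro exI[of _ "\<lambda>t. f' t - g' t"] conjI allI impI has_vector_derivative_diff continuous_on_diff) auto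
qed

definition ode_solution :: "(real \<Rightarrow> 'a \<Rightarrow> 'a::real_normed_vector) \<Rightarrow> (real \<Rightarrow> 'a) \<Rightarrow> bool" where
  "ode_solution F z \<longleftrightarrow> (\<forall>s\<ge>0. (z has_vector_derivative F s (z s)) (at s within {0..}))"

locale linear_ode =
  fixes F :: "real \<Rightarrow> 'a::real_inner \<Rightarrow> 'a" and L :: real
  assumes linear: "\<And>s. linear (F s)"
    and bounded: "\<And>s v. 0 \<le> s \<Longrightarrow> norm (F s v) \<le> L * norm v"
    and L_nonneg: "0 \<le> L"
begin

lemma solution_within_Icc:
  assumes "ode_solution F z" "s \<in> {0..t}"
  shows "(z has_vector_derivative F s (z s)) (at s within {0..t})"
  using assms unfolding ode_solution_def by (auto intro: has_vector_derivative_within_subset)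

lemma solution_diff:
  assumes "ode_solution F z" "ode_solution F z'"
  shows "ode_solution F (\<lambda>s. z s - z' s)"
  using assms unfolding ode_solution_def
  by (auto simp: linear_diff[OF linear] intro!: has_vector_derivative_diff)

lemma abs_inner_le: "0 \<le> s \<Longrightarrow> \<bar>v \<bullet> F s v\<bar> \<le> L * (v \<bullet> v)"
proof -
  assume "0 \<le> s"
  have "\<bar>v \<bullet> F s v\<bar> \<le> norm v * norm (F s v)" by (rule Cauchy_Schwarz_ineq2)
  also have "\<dots> \<le> norm v * (L * norm v)" by (rule mult_left_mono[OF bounded[OF \<open>0 \<le> s\<close>]]) simp
  finally show ?thesis by (simp add: power2_norm_eq_inner[symmetric] power2_eq_square mult_ac)
qed

lemma norm_solution_le:
  assumes "ode_solution F z" "0 \<le> t"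
  shows "norm (z t) \<le> exp (L * t) * norm (z 0)"
proof (rule norm_le_exp_of_inner_le)
  have "z t \<bullet> z t \<le> exp (- (- 2 * L) * (t - 0)) * (z 0 \<bullet> z 0)"
  proof (rule inner_self_exp_decay[OF \<open>0 \<le> t\<close>])
    show "(z has_vector_derivative F s (z s)) (at s within {0..t})" if "s \<in> {0..t}" for s
      using assms(1) that by (rule solution_within_Icc)
    show "2 * (z s \<bullet> F s (z s)) \<le> - (- 2 * L) * (z s \<bullet> z s)" if "s \<in> {0..t}" for s
      using abs_inner_le[of s "z s"] that by auto
  qed
  then show "z t \<bullet> z t \<le> exp (2 * (L * t)) * (z 0 \<bullet> z 0)" by (simp add: mult.assoc)
qed

lemma norm_initial_le:
  assumes "ode_solution F z" "0 \<le> t"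
  shows "norm (z 0) \<le> exp (L * t) * norm (z t)"
proof (rule norm_le_exp_of_inner_le)
  have "z 0 \<bullet> z 0 \<le> exp (2 * L * (t - 0)) * (z t \<bullet> z t)"
  proof (rule inner_self_exp_growth_backward[OF \<open>0 \<le> t\<close>])
    show "(z has_vector_derivative F s (z s)) (at s within {0..t})" if "s \<in> {0..t}" for s
      using assms(1) that by (rule solution_within_Icc)
    show "- (2 * L) * (z s \<bullet> z s) \<le> 2 * (z s \<bullet> F s (z s))" if "s \<in> {0..t}" for s
      using abs_inner_le[of s "z s"] that by auto
  qed
  then show "z 0 \<bullet> z 0 \<le> exp (2 * (L * t)) * (z t \<bullet> z t)" by (simp add: mult.assoc)
qed

lemma solution_unique_backward:
  assumes "ode_solution F z" "ode_solution F z'" "0 \<le> t" "z t = z' t"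
  shows "z 0 = z' 0"
  using norm_initial_le[OF solution_diff[OF assms(1,2)] assms(3)] assms(4) by simp

lemma solution_lipschitz:
  assumes "ode_solution F z" "a \<in> {0..N}" "b \<in> {0..N}"
  shows "norm (z a - z b) \<le> L * exp (L * N) * norm (z 0) * \<bar>a - b\<bar>"
proof (rule norm_diff_le_of_vector_derivative_bound[of "{0..N}"])
  show "(z has_vector_derivative F s (z s)) (at s within {0..N})" if "s \<in> {0..N}" for s
    using assms(1) that by (rule solution_within_Icc)
  show "norm (F s (z s)) \<le> L * exp (L * N) * norm (z 0)" if "s \<in> {0..N}" for s
  proof -
    have "norm (F s (z s)) \<le> L * norm (z s)" using that by (intro bounded) simp
    also have "\<dots> \<le> L * (exp (L * s) * norm (z 0))"
      using that by (intro mult_left_mono norm_solution_le[OF assms(1)] L_nonneg) simp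
    also have "\<dots> \<le> L * (exp (L * N) * norm (z 0))"
      using that L_nonneg by (intro mult_left_mono mult_right_mono) (auto intro: mult_left_mono)
    finally show ?thesis by (simp add: mult.assoc)
  qed
qed (use assms in auto)

lemma initial_value_lipschitz:
  assumes z: "ode_solution F z" and z': "ode_solution F z'" and "t \<in> {0..N}" "t' \<in> {0..N}"
  shows "norm (z' 0 - z 0)
    \<le> exp (L * N) * (norm (z' t' - z t) + L * exp (L * N) * norm (z 0) * \<bar>t' - t\<bar>)"
proof -
  have "norm (z' 0 - z 0) \<le> exp (L * t') * norm (z' t' - z t')"
    using norm_initial_le[OF solution_diff[OF z' z]] \<open>t' \<in> {0..N}\<close> by simp
  also have "\<dots> \<le> exp (L * N) * norm (z' t' - z t')"
    using \<open>t' \<in> {0..N}\<close> L_nonneg by (intro mult_right_mono) (auto intro: mult_left_mono)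
  also have "norm (z' t' - z t') \<le> norm (z' t' - z t) + norm (z t - z t')"
    using norm_triangle_ineq[of "z' t' - z t" "z t - z t'"] by simp
  also have "norm (z t - z t') \<le> L * exp (L * N) * norm (z 0) * \<bar>t - t'\<bar>"
    using z assms(3,4) by (rule solution_lipschitz)
  finally show ?thesis by (simp add: abs_minus_commute mult_left_mono)
qed

end

lemma negligible_locally_Lipschitz_image_lowdim:
  fixes f :: "'M::euclidean_space \<Rightarrow> 'N::euclidean_space"
  assumes "DIM('M) < DIM('N)"
    and lips: "\<And>x. x \<in> S \<Longrightarrow> \<exists>T B. open T \<and> x \<in> T \<and> (\<forall>y \<in> S \<inter> T. norm (f y - f x) \<le> B * norm (y - x))"
  shows "negligible (f ` S)"
proof -
  have "negligible ((f \<circ> fst) ` (S \<times> {0::real}))"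
  proof (rule negligible_locally_Lipschitz_image)
    show "DIM('M \<times> real) \<le> DIM('N)" using assms(1) by simp
    have "negligible {v :: 'M \<times> real. (0, 1) \<bullet> v = 0}"
      by (rule negligible_hyperplane) (simp add: zero_prod_def)
    then show "negligible (S \<times> {0::real})" by (rule negligible_subset) auto
  next
    fix p assume "p \<in> S \<times> {0::real}"
    then obtain x where "x \<in> S" and p: "p = (x, 0)" by auto
    then obtain T B where "open T" "x \<in> T" and B: "\<forall>y \<in> S \<inter> T. norm (f y - f x) \<le> B * norm (y - x)"
      using lips by blast
    show "\<exists>T B. open T \<and> p \<in> T \<and> (\<forall>q \<in> S \<times> {0} \<inter> T. norm ((f \<circ> fst) q - (f \<circ> fst) p) \<le> B * norm (q - p))"
      using B \<open>open T\<close> \<open>x \<in> T\<close> unfolding p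
      by (intro exI[of _ "T \<times> UNIV"] exI[of _ B]) (auto simp: open_Times)
  qed
  moreover have "(f \<circ> fst) ` (S \<times> {0::real}) = f ` S" by force
  ultimately show ?thesis by simp
qed

lemma initial_value_lipschitz_along_curve:
  fixes F :: "real \<Rightarrow> 'a::real_inner \<times> 'b::real_inner \<Rightarrow> 'a \<times> 'b"
  assumes "linear_ode F L"
    and z: "ode_solution F z" "z t = (w t, y)" and z': "ode_solution F z'" "z' t' = (w t', y')"
    and "t \<in> {0..N}" "t' \<in> {0..N}"
    and "0 \<le> M" "norm (w t' - w t) \<le> M * \<bar>t' - t\<bar>"
  shows "norm (z' 0 - z 0)
    \<le> exp (L * N) * (M + 1 + L * exp (L * N) * norm (z 0)) * norm ((t', y') - (t, y))"
proof -
  interpret linear_ode F L by fact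
  define K where "K = L * exp (L * N) * norm (z 0)"
  have "0 \<le> K" unfolding K_def using L_nonneg by simp
  have dt: "\<bar>t' - t\<bar> \<le> norm ((t', y') - (t, y))" and dy: "norm (y' - y) \<le> norm ((t', y') - (t, y))"
    using norm_fst_le[of "t' - t" "y' - y"] norm_snd_le[of "y' - y" "t' - t"] by simp_all
  have "norm (z' t' - z t) = norm (w t' - w t, y' - y)" using z(2) z'(2) by simp
  also have "\<dots> \<le> norm (w t' - w t) + norm (y' - y)" by (rule norm_Pair_le)
  also have "\<dots> \<le> M * \<bar>t' - t\<bar> + norm (y' - y)" using assms(9) by simp
  also have "\<dots> \<le> (M + 1) * norm ((t', y') - (t, y))"
    using dt dy \<open>0 \<le> M\<close> by (simp add: distrib_right mult_left_mono add_mono)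
  finally have "norm (z' t' - z t) + K * \<bar>t' - t\<bar> \<le> (M + 1 + K) * norm ((t', y') - (t, y))"
    using dt \<open>0 \<le> K\<close> by (simp add: distrib_right add_mono mult_left_mono)
  then have "exp (L * N) * (norm (z' t' - z t) + K * \<bar>t' - t\<bar>)
      \<le> exp (L * N) * ((M + 1 + K) * norm ((t', y') - (t, y)))"
    by (rule mult_left_mono) simp
  moreover have "norm (z' 0 - z 0) \<le> exp (L * N) * (norm (z' t' - z t) + K * \<bar>t' - t\<bar>)"
    unfolding K_def using z(1) z'(1) assms(6,7) by (rule initial_value_lipschitz)
  ultimately show ?thesis unfolding K_def by (simp only: mult.assoc)
qed

lemma negligible_hitting_initial_states:
  fixes F :: "real \<Rightarrow> 'a::euclidean_space \<times> 'b::euclidean_space \<Rightarrow> 'a \<times> 'b"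
    and w :: "real \<Rightarrow> 'a"
  assumes "linear_ode F L" and "1 < DIM('a)"
    and w': "\<And>t. 0 \<le> t \<Longrightarrow> (w has_vector_derivative w' t) (at t within {0..})"
    and "continuous_on {0..} w'"
  shows "negligible {z0. \<exists>z. z 0 = z0 \<and> ode_solution F z \<and> (\<exists>t\<ge>0. fst (z t) = w t)}"
proof -
  \<comment> \<open>Restricting to the pairs (t, y) through which a solution passes avoids any existence theorem.\<close>
  define through where "through p z \<longleftrightarrow> ode_solution F z \<and> z (fst p) = (w (fst p), snd p)"
    for p :: "real \<times> 'b" and z
  define S where "S = {p. 0 \<le> fst p \<and> (\<exists>z. through p z)}"
  define sol where "sol p = (SOME z. through p z)" for p
  have through_sol: "through p (sol p)" if "p \<in> S" for p
    using that someI_ex[of "through p"] unfolding S_def sol_def by blast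
  have "negligible ((\<lambda>p. sol p 0) ` S)"
  proof (rule negligible_locally_Lipschitz_image_lowdim)
    show "DIM(real \<times> 'b) < DIM('a \<times> 'b)" using assms(2) by simp
  next
    fix p assume "p \<in> S"
    define N where "N = fst p + 1"
    obtain M where "0 \<le> M" and M: "\<And>a b. a \<in> {0..N} \<Longrightarrow> b \<in> {0..N} \<Longrightarrow> norm (w a - w b) \<le> M * \<bar>a - b\<bar>"
      using lipschitz_on_Icc_of_continuous_derivative[OF w' assms(4)] by blast
    have "norm (sol q 0 - sol p 0)
        \<le> exp (L * N) * (M + 1 + L * exp (L * N) * norm (sol p 0)) * norm (q - p)"
      if "q \<in> S \<inter> ball p 1" for q
    proof -
      have "\<bar>fst q - fst p\<bar> \<le> norm (q - p)"
        using norm_fst_le[of "fst (q - p)" "snd (q - p)"] unfolding prod.collapse by simp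
      moreover have "norm (q - p) < 1" using that by (simp add: dist_norm norm_minus_commute)
      ultimately have "\<bar>fst q - fst p\<bar> < 1" by linarith
      then have "fst p \<in> {0..N}" "fst q \<in> {0..N}" using \<open>p \<in> S\<close> that unfolding S_def N_def by auto
      with through_sol[of p] through_sol[of q] \<open>p \<in> S\<close> that show ?thesis
        using initial_value_lipschitz_along_curve[OF assms(1), of "sol p" "fst p" w "snd p" "sol q" "fst q" "snd q" N M]
        by (auto simp: through_def M \<open>0 \<le> M\<close>)
    qed
    then show "\<exists>T B. open T \<and> p \<in> T \<and> (\<forall>q \<in> S \<inter> T. norm (sol q 0 - sol p 0) \<le> B * norm (q - p))"
      by (intro exI[of _ "ball p 1"] exI[of _ "exp (L * N) * (M + 1 + L * exp (L * N) * norm (sol p 0))"])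
        auto
  qed
  moreover have "{z0. \<exists>z. z 0 = z0 \<and> ode_solution F z \<and> (\<exists>t\<ge>0. fst (z t) = w t)} \<subseteq> (\<lambda>p. sol p 0) ` S"
  proof
    fix z0 assume "z0 \<in> {z0. \<exists>z. z 0 = z0 \<and> ode_solution F z \<and> (\<exists>t\<ge>0. fst (z t) = w t)}"
    then obtain z t where "z 0 = z0" "ode_solution F z" "0 \<le> t" "fst (z t) = w t" by blast
    then have "through (t, snd (z t)) z" unfolding through_def by (metis prod.collapse fst_conv snd_conv)
    then have "(t, snd (z t)) \<in> S" using \<open>0 \<le> t\<close> unfolding S_def by auto
    moreover have "sol (t, snd (z t)) 0 = z 0"
      using through_sol[OF \<open>(t, snd (z t)) \<in> S\<close>] \<open>through (t, snd (z t)) z\<close> \<open>0 \<le> t\<close>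
      by (intro linear_ode.solution_unique_backward[OF assms(1)]) (auto simp: through_def)
    ultimately show "z0 \<in> (\<lambda>p. sol p 0) ` S" using \<open>z 0 = z0\<close> by force
  qed
  ultimately show ?thesis by (rule negligible_subset)
qed

lemma linear_ode_ltv_field:
  assumes "\<And>t. 0 \<le> t \<Longrightarrow> \<bar>\<beta> t\<bar> \<le> B"
  shows "linear_ode (ltv_field \<beta> k1 k2) (1 + B * (\<bar>1 + k1 * k2\<bar> + \<bar>k1 + k2\<bar>))"
proof (rule linear_ode.intro)
  show "linear (ltv_field \<beta> k1 k2 s)" for s
    by (rule linearI) (auto simp: ltv_field_def algebra_simps)
  have "0 \<le> B" using assms[of 0] by simp
  then show "0 \<le> 1 + B * (\<bar>1 + k1 * k2\<bar> + \<bar>k1 + k2\<bar>)" by simp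
  show "norm (ltv_field \<beta> k1 k2 s v) \<le> (1 + B * (\<bar>1 + k1 * k2\<bar> + \<bar>k1 + k2\<bar>)) * norm v"
    if "0 \<le> s" for s v
  proof -
    have fst_le: "norm (fst v) \<le> norm v" and snd_le: "norm (snd v) \<le> norm v"
      by (metis norm_fst_le prod.collapse) (metis norm_snd_le prod.collapse)
    have "norm ((1 + k1 * k2) *\<^sub>R fst v + (k1 + k2) *\<^sub>R snd v)
        \<le> \<bar>1 + k1 * k2\<bar> * norm (fst v) + \<bar>k1 + k2\<bar> * norm (snd v)"
      by (rule norm_triangle_le) simp
    also have "\<dots> \<le> (\<bar>1 + k1 * k2\<bar> + \<bar>k1 + k2\<bar>) * norm v"
      using fst_le snd_le by (simp add: distrib_right add_mono mult_left_mono)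
    finally have feedback: "norm ((1 + k1 * k2) *\<^sub>R fst v + (k1 + k2) *\<^sub>R snd v)
        \<le> (\<bar>1 + k1 * k2\<bar> + \<bar>k1 + k2\<bar>) * norm v" .
    have "norm (ltv_field \<beta> k1 k2 s v)
        \<le> norm (snd v) + \<bar>\<beta> s\<bar> * norm ((1 + k1 * k2) *\<^sub>R fst v + (k1 + k2) *\<^sub>R snd v)"
      unfolding ltv_field_def by (rule order_trans[OF norm_Pair_le]) simp
    also have "\<dots> \<le> norm v + B * ((\<bar>1 + k1 * k2\<bar> + \<bar>k1 + k2\<bar>) * norm v)"
      using snd_le feedback assms[OF that] \<open>0 \<le> B\<close> by (intro add_mono mult_mono) auto
    finally show ?thesis by (simp add: algebra_simps)
  qed
qed

lemma null_sets_ltv_hitting_set: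
  assumes "\<And>t. 0 \<le> t \<Longrightarrow> \<bar>\<beta> t\<bar> \<le> B" and "finite J" and "\<And>j. j \<in> J \<Longrightarrow> C1_nonneg (w j)"
  shows "{z0 :: state. \<exists>z. z 0 = z0
      \<and> (\<forall>s\<ge>0. (z has_vector_derivative ltv_field \<beta> k1 k2 s (z s)) (at s within {0..}))
      \<and> (\<exists>t\<ge>0. \<exists>j\<in>J. fst (z t) = w j t)} \<in> null_sets lebesgue"
proof -
  have ode: "linear_ode (ltv_field \<beta> k1 k2) (1 + B * (\<bar>1 + k1 * k2\<bar> + \<bar>k1 + k2\<bar>))"
    using assms(1) by (rule linear_ode_ltv_field)
  have "negligible {z0. \<exists>z. z 0 = z0 \<and> ode_solution (ltv_field \<beta> k1 k2) z \<and> (\<exists>t\<ge>0. fst (z t) = w j t)}"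
    if "j \<in> J" for j
    using assms(3)[OF that] unfolding C1_nonneg_def by (auto intro: negligible_hitting_initial_states[OF ode])
  then have "negligible (\<Union>j\<in>J.
      {z0. \<exists>z. z 0 = z0 \<and> ode_solution (ltv_field \<beta> k1 k2) z \<and> (\<exists>t\<ge>0. fst (z t) = w j t)})"
    using assms(2) by (intro negligible_Union) auto
  then show ?thesis
    unfolding negligible_iff_null_sets[symmetric] ode_solution_def by (rule negligible_subset) blast
qed

theorem proposition2:
  fixes P :: nat and \<mu> :: "nat \<Rightarrow> real" and r :: "nat \<Rightarrow> real \<Rightarrow> real^3"
    and rs :: "real \<Rightarrow> real^3" and k1 k2 \<beta>min :: real and \<beta> :: "real \<Rightarrow> real"
  assumes P: "P \<ge> 1"
    and mu_pos: "\<forall>j\<in>{1..P}. \<mu> j > 0"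
    and r_C1: "\<forall>j\<in>{1..P}. C1_nonneg (r j)"
    and r1_zero: "\<forall>t\<ge>0. r 1 t = 0"
    and rs_C1: "C1_nonneg rs"
    and rs_ne: "\<forall>t\<ge>0. \<forall>j\<in>{1..P}. rs t \<noteq> r j t"
    and k1: "k1 > 0" and k2: "k2 > 0"
    and bmin: "beta_crit k1 k2 < \<beta>min" "\<beta>min \<le> 1"
    and beta_cont: "continuous_on {0..} \<beta>"
    and beta_range: "\<forall>t\<ge>0. \<beta>min \<le> \<beta> t \<and> \<beta> t \<le> 1"
  shows "rho_const k1 > 0 \<and> theta_const k1 k2 \<beta>min > 0
    \<and> (\<forall>z0 :: (real^3) \<times> (real^3). \<forall>T\<ge>0. \<forall>z :: real \<Rightarrow> (real^3) \<times> (real^3).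
          z 0 = z0
          \<and> (\<forall>s\<in>{0..T}. (z has_vector_derivative closed_loop P \<mu> r rs \<beta> k1 k2 s (z s)) (at s within {0..T}))
          \<and> (\<forall>s\<in>{0..T}. z s \<in> dom_D P r rs s)
          \<longrightarrow> (\<forall>t\<in>{0..T}. norm (z t) \<le> rho_const k1 * norm z0 * exp (- theta_const k1 k2 \<beta>min * t)))
    \<and> {z0 :: (real^3) \<times> (real^3). \<exists>z :: real \<Rightarrow> (real^3) \<times> (real^3).
          z 0 = z0
          \<and> (\<forall>s\<ge>0. (z has_vector_derivative ltv_field \<beta> k1 k2 s (z s)) (at s within {0..}))
          \<and> (\<exists>t\<ge>0. \<exists>j\<in>{1..P}. fst (z t) = wj r rs j t)} \<in> null_sets lebesgue"
proof (intro conjI allI impI ballI)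
  \<comment> \<open>The feedback cancels f_a identically.\<close>
  show "0 < rho_const k1" by (rule rho_const_pos)
  show "0 < theta_const k1 k2 \<beta>min" using k1 k2 bmin by (rule theta_const_pos)
next
  fix z0 T z t
  assume "0 \<le> T" and "z 0 = z0
      \<and> (\<forall>s\<in>{0..T}. (z has_vector_derivative closed_loop P \<mu> r rs \<beta> k1 k2 s (z s)) (at s within {0..T}))
      \<and> (\<forall>s\<in>{0..T}. z s \<in> dom_D P r rs s)"
    and "t \<in> {0..T}"
  then show "norm (z t) \<le> rho_const k1 * norm z0 * exp (- theta_const k1 k2 \<beta>min * t)"
    using ltv_field_exponential_bound[OF k1 k2 bmin(1), of T \<beta> z t] beta_range
    unfolding closed_loop_eq_ltv_field by auto
next
  have "\<bar>\<beta> t\<bar> \<le> 1 + \<bar>\<beta>min\<bar>" if "0 \<le> t" for t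
    using beta_range that by fastforce
  moreover have "C1_nonneg (wj r rs j)" if "j \<in> {1..P}" for j
    unfolding wj_def[abs_def] using r_C1 rs_C1 that by (intro C1_nonneg_diff) auto
  ultimately show "{z0 :: (real^3) \<times> (real^3). \<exists>z :: real \<Rightarrow> (real^3) \<times> (real^3).
          z 0 = z0
          \<and> (\<forall>s\<ge>0. (z has_vector_derivative ltv_field \<beta> k1 k2 s (z s)) (at s within {0..}))
          \<and> (\<exists>t\<ge>0. \<exists>j\<in>{1..P}. fst (z t) = wj r rs j t)} \<in> null_sets lebesgue"
    by (intro null_sets_ltv_hitting_set) auto
qed

end
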